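(* Let $X$ be a Polish topological vector space over $\mathbb K\in\{\mathbb R,\mathbb C\}$, let $T$ be a continuous linear operator on $X$, and let $a,b\in\mathbb K$. Assume that $aT$ and $bT$ each admit an invariant Borel probability measure different from $\delta_0$. Then $aT$ and $bT$ are orthogonal if and only if $|a|\neq|b|$. More precisely: if $|a|\ne|b|$ then $aT$ and $bT$ are orthogonal, and if $|a|=|b|$ then there is a Borel probability measure different from $\delta_0$ which is invariant under both $aT$ and $bT$.
   Context: Two continuous linear operators $T_1,T_2$ on $X$ are called orthogonal if whenever $m_1$ is a $T_1$-invariant Borel probability measure and $m_2$ is a $T_2$-invariant Borel probability measure with $m_1(\{0\})=0=m_2(\{0\})$, the measures $m_1$ and $m_2$ are mutually singular. A measure $m$ is $T$-invariant if $m(T^{-1}(A))=m(A)$ for all Borel $A$. *)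

theory Defs
  imports "HOL-Analysis.Analysis" "HOL-Probability.Probability"
begin

text \<open>A Polish topological vector space over the scalar field 'k (real or complex,
  or any real normed field; by Gelfand-Mazur these are R and C up to isomorphism).\<close>
definition polish_tvs :: "('k::real_normed_field \<Rightarrow> 'a::{ab_group_add,polish_space} \<Rightarrow> 'a) \<Rightarrow> bool" where
  "polish_tvs smult_op \<longleftrightarrow>
     vector_space smult_op \<and>
     continuous_on UNIV (\<lambda>p::'a \<times> 'a. fst p + snd p) \<and>
     continuous_on UNIV (\<lambda>p::'k \<times> 'a. smult_op (fst p) (snd p))"

definition borel_prob :: "'a::topological_space measure \<Rightarrow> bool" where
  "borel_prob m \<longleftrightarrow> prob_space m \<and> sets m = sets borel"

definition invariant_measure :: "('a::topological_space \<Rightarrow> 'a) \<Rightarrow> 'a measure \<Rightarrow> bool" where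
  "invariant_measure T m \<longleftrightarrow> (\<forall>A\<in>sets borel. emeasure m (T -` A) = emeasure m A)"

definition mutually_singular :: "'a::topological_space measure \<Rightarrow> 'a measure \<Rightarrow> bool" where
  "mutually_singular m1 m2 \<longleftrightarrow>
     (\<exists>A\<in>sets borel. emeasure m1 A = 0 \<and> emeasure m2 (UNIV - A) = 0)"

definition orthogonal_ops :: "('a::{topological_space,zero} \<Rightarrow> 'a) \<Rightarrow> ('a \<Rightarrow> 'a) \<Rightarrow> bool" where
  "orthogonal_ops T1 T2 \<longleftrightarrow>
     (\<forall>m1 m2. borel_prob m1 \<and> invariant_measure T1 m1 \<and>
              borel_prob m2 \<and> invariant_measure T2 m2 \<and>
              emeasure m1 {0} = 0 \<and> emeasure m2 {0} = 0
              \<longrightarrow> mutually_singular m1 m2)"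

end

theory Submission
  imports Defs "HOL-Computational_Algebra.Fundamental_Theorem_Algebra"
begin

text \<open>If \<open>|a| < |b|\<close>, then \<open>(aT)\<^sup>N x\<close> and \<open>(bT)\<^sup>N x\<close> differ by the factor \<open>(a/b)\<^sup>N \<rightarrow> 0\<close>.
  Take compact sets carrying almost all of \<open>m\<^sub>1\<close> (away from \<open>0\<close>) and of \<open>m\<^sub>2\<close>: for large \<open>N\<close> their
  preimages under \<open>(aT)\<^sup>N\<close> and \<open>(bT)\<^sup>N\<close> are disjoint and, by invariance, still carry almost all of
  the respective measure; Borel--Cantelli turns these approximate separations into mutual
  singularity. If \<open>|a| = |b|\<close>, then \<open>bT = u \<cdot> aT\<close> with \<open>|u| = 1\<close>, and averaging an \<open>aT\<close>-invariant
  measure that does not charge \<open>0\<close> over all rotations \<open>x \<mapsto> cis \<theta> \<cdot> x\<close> gives a measure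
  invariant under both \<open>aT\<close> and \<open>bT\<close>. Since the scalar field is only assumed to be a real normed field, the
  rotations are built from a square root of \<open>-1\<close> found by a Kametani-style Gelfand--Mazur
  argument: every element is a root of a real quadratic.\<close>

section \<open>Every element of a real normed field is quadratic over \<open>\<real>\<close>\<close>

lemma prod_sub_roots_of_unity:
  fixes s :: complex
  assumes n: "n > 0"
  shows "(\<Prod>k<n. s - cis (2 * pi * real k / real n)) = s ^ n - 1"
proof -
  define p :: "complex poly" where "p = [:-1:] + monom 1 n"
  have poly_p: "poly p a = a ^ n - 1" for a
    by (simp add: p_def poly_monom)
  have "rsquarefree p"
    unfolding rsquarefree_roots
  proof (intro allI notI)
    fix a assume "poly p a = 0 \<and> poly (pderiv p) a = 0"
    moreover from this have "a = 0"
      using n by (simp add: p_def pderiv_add pderiv_monom poly_monom)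
    ultimately show False using n by (simp add: poly_p power_0_left)
  qed
  moreover have "lead_coeff p = 1"
    unfolding p_def using n by (subst lead_coeff_add_le) (simp_all add: degree_monom_eq)
  ultimately have p: "p = (\<Prod>z | poly p z = 0. [:- z, 1:])"
    using complex_poly_decompose_rsquarefree[of p] by simp
  have "s ^ n - 1 = poly (\<Prod>z | poly p z = 0. [:- z, 1:]) s"
    unfolding p[symmetric] by (simp add: poly_p)
  also have "\<dots> = (\<Prod>z | z ^ n = 1. s - z)"
    by (simp add: poly_prod poly_p)
  also have "\<dots> = (\<Prod>k<n. s - cis (2 * pi * real k / real n))"
    by (rule prod.reindex_bij_betw[OF Complex.bij_betw_roots_unity[OF n], symmetric])
  finally show ?thesis by simp
qed

lemma prod_sub_roots_of_unity_scaled: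
  fixes t w :: complex
  assumes n: "n > 0"
  shows "(\<Prod>k<n. t - cis (2 * pi * real k / real n) * w) = t ^ n - w ^ n"
proof (cases "w = 0")
  case True
  then show ?thesis using n by (simp add: power_0_left)
next
  case False
  have "(\<Prod>k<n. t - cis (2 * pi * real k / real n) * w) =
      (\<Prod>k<n. w * (t / w - cis (2 * pi * real k / real n)))"
    using False by (intro prod.cong) (auto simp: field_simps)
  also have "\<dots> = w ^ n * ((t / w) ^ n - 1)"
    by (simp add: prod.distrib prod_sub_roots_of_unity[OF n])
  also have "\<dots> = t ^ n - w ^ n"
    using False by (simp add: field_simps)
  finally show ?thesis .
qed

lemma map_poly_of_real_add:
  "map_poly (of_real :: real \<Rightarrow> 'a::{comm_ring_1,real_algebra_1}) (p + q) =
     map_poly of_real p + map_poly of_real q"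
  by (intro poly_eqI) (simp add: coeff_map_poly)

lemma map_poly_of_real_diff:
  "map_poly (of_real :: real \<Rightarrow> 'a::{comm_ring_1,real_algebra_1}) (p - q) =
     map_poly of_real p - map_poly of_real q"
  by (intro poly_eqI) (simp add: coeff_map_poly)

lemma map_poly_of_real_mult:
  "map_poly (of_real :: real \<Rightarrow> 'a::{comm_ring_1,real_algebra_1}) (p * q) =
     map_poly of_real p * map_poly of_real q"
  by (intro poly_eqI) (simp add: coeff_map_poly coeff_mult)

lemma map_poly_of_real_power:
  "map_poly (of_real :: real \<Rightarrow> 'a::{comm_ring_1,real_algebra_1}) (p ^ n) = map_poly of_real p ^ n"
  by (induction n) (simp_all add: map_poly_of_real_mult)

lemma map_poly_of_real_prod:
  "map_poly (of_real :: real \<Rightarrow> 'a::{comm_ring_1,real_algebra_1}) (\<Prod>i\<in>A. f i) =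
     (\<Prod>i\<in>A. map_poly of_real (f i))"
  by (induction A rule: infinite_finite_induct) (simp_all add: map_poly_of_real_mult)

lemma map_poly_of_real_sum:
  "map_poly (of_real :: real \<Rightarrow> 'a::{comm_ring_1,real_algebra_1}) (\<Sum>i\<in>A. f i) =
     (\<Sum>i\<in>A. map_poly of_real (f i))"
  by (induction A rule: infinite_finite_induct) (simp_all add: map_poly_of_real_add)

lemma map_poly_of_real_smult:
  "map_poly (of_real :: real \<Rightarrow> 'a::{comm_ring_1,real_algebra_1}) (smult c p) =
     smult (of_real c) (map_poly of_real p)"
  by (intro poly_eqI) (simp add: coeff_map_poly)

lemma map_poly_of_real_inject:
  "map_poly (of_real :: real \<Rightarrow> 'a::{comm_ring_1,real_algebra_1}) p = map_poly of_real q \<longleftrightarrow> p = q"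
  by (metis coeff_map_poly of_real_0 of_real_eq_iff poly_eqI)

lemmas map_poly_of_real_simps =
  map_poly_of_real_add map_poly_of_real_diff map_poly_of_real_power map_poly_of_real_smult
  map_poly_pCons

definition real_quadratic :: "complex \<Rightarrow> real poly" where
  "real_quadratic z = [:(cmod z)\<^sup>2, -2 * Re z, 1:]"

lemma poly_real_quadratic:
  "poly (map_poly of_real (real_quadratic z)) (x :: 'a::{comm_ring_1,real_algebra_1}) =
     x\<^sup>2 - of_real (2 * Re z) * x + of_real ((cmod z)\<^sup>2)"
  by (simp add: real_quadratic_def map_poly_pCons algebra_simps power2_eq_square)

lemma poly_real_quadratic_complex:
  "poly (map_poly of_real (real_quadratic z)) y = (y - z) * (y - cnj z)"
proof -
  have "(y - z) * (y - cnj z) = y\<^sup>2 - (z + cnj z) * y + z * cnj z"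
    by (simp add: algebra_simps power2_eq_square)
  also have "z + cnj z = of_real (2 * Re z)" by (simp add: complex_add_cnj)
  also have "z * cnj z = of_real ((cmod z)\<^sup>2)" by (metis complex_norm_square)
  finally show ?thesis by (simp add: poly_real_quadratic)
qed

text \<open>The real part of \<open>w ^ n * (X - cnj z) ^ n\<close>, expanded binomially.\<close>
definition cross_term :: "nat \<Rightarrow> complex \<Rightarrow> complex \<Rightarrow> real poly" where
  "cross_term n z w = (\<Sum>i\<le>n. monom (real (n choose i) * Re (w ^ n * (- cnj z) ^ (n - i))) i)"

lemma poly_cross_term:
  "poly (map_poly of_real (cross_term n z w)) (x :: 'a::{comm_ring_1,real_algebra_1}) =
     (\<Sum>i\<le>n. of_real (real (n choose i) * Re (w ^ n * (- cnj z) ^ (n - i))) * x ^ i)"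
  by (simp add: cross_term_def map_poly_of_real_sum map_poly_monom poly_sum poly_monom)

lemma poly_cross_term_complex:
  "2 * poly (map_poly of_real (cross_term n z w)) y = w ^ n * (y - cnj z) ^ n + cnj w ^ n * (y - z) ^ n"
proof -
  have re: "2 * (complex_of_real (real m * Re u) * v) = (of_nat m * u + of_nat m * cnj u) * v" for m u v
    by (simp add: complex_eq_iff algebra_simps)
  have "2 * poly (map_poly of_real (cross_term n z w)) y =
      (\<Sum>i\<le>n. (of_nat (n choose i) * (w ^ n * (- cnj z) ^ (n - i)) +
               of_nat (n choose i) * cnj (w ^ n * (- cnj z) ^ (n - i))) * y ^ i)"
    unfolding poly_cross_term sum_distrib_left by (intro sum.cong refl) (simp only: re)
  also have "\<dots> = w ^ n * (\<Sum>i\<le>n. of_nat (n choose i) * y ^ i * (- cnj z) ^ (n - i))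
      + cnj w ^ n * (\<Sum>i\<le>n. of_nat (n choose i) * y ^ i * (- z) ^ (n - i))"
    by (simp add: sum_distrib_left sum.distrib algebra_simps)
  also have "\<dots> = w ^ n * (y - cnj z) ^ n + cnj w ^ n * (y - z) ^ n"
    by (simp add: binomial_ring[symmetric])
  finally show ?thesis .
qed

lemma norm_poly_cross_term_le:
  "norm (poly (map_poly of_real (cross_term n z w)) (x :: 'k::real_normed_field)) \<le>
     (cmod w * (norm x + cmod z)) ^ n"
proof -
  have "norm (poly (map_poly of_real (cross_term n z w)) x) \<le>
      (\<Sum>i\<le>n. norm (of_real (real (n choose i) * Re (w ^ n * (- cnj z) ^ (n - i))) * x ^ i))"
    unfolding poly_cross_term by (rule norm_sum)
  also have "\<dots> \<le> (\<Sum>i\<le>n. real (n choose i) * (cmod w ^ n * cmod z ^ (n - i)) * norm x ^ i)"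
  proof (intro sum_mono)
    fix i
    have norm_term: "norm (of_real (real m * r) * x ^ i) = real m * \<bar>r\<bar> * norm x ^ i" for m r
      by (simp add: norm_mult norm_power abs_mult)
    have "\<bar>Re (w ^ n * (- cnj z) ^ (n - i))\<bar> \<le> cmod (w ^ n * (- cnj z) ^ (n - i))"
      by (rule abs_Re_le_cmod)
    also have "\<dots> = cmod w ^ n * cmod z ^ (n - i)"
      by (simp add: norm_mult norm_power)
    finally show "norm (of_real (real (n choose i) * Re (w ^ n * (- cnj z) ^ (n - i))) * x ^ i)
        \<le> real (n choose i) * (cmod w ^ n * cmod z ^ (n - i)) * norm x ^ i"
      unfolding norm_term by (intro mult_left_mono mult_right_mono) auto
  qed
  also have "\<dots> = cmod w ^ n * (norm x + cmod z) ^ n"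
    by (simp add: binomial_ring sum_distrib_left algebra_simps)
  finally show ?thesis by (simp add: power_mult_distrib)
qed

text \<open>Taking the product over the \<open>n\<close>-th roots of unity \<open>\<omega>\<close> kills every power of \<open>w\<close>
  except \<open>w\<^sup>0\<close> and \<open>w\<^sup>n\<close>.\<close>
lemma prod_real_quadratic_roots_of_unity:
  assumes n: "n > 0"
  shows "(\<Prod>k<n. real_quadratic (z + cis (2 * pi * real k / real n) * w)) =
     real_quadratic z ^ n - smult 2 (cross_term n z w) + [:(cmod w) ^ (2 * n):]"
    (is "?L = ?R")
proof -
  let ?\<omega> = "\<lambda>k. cis (2 * pi * real k / real n)"
  have "poly (map_poly of_real ?L) y = poly (map_poly of_real ?R) y" for y :: complex
  proof -
    have "poly (map_poly of_real ?L) y =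
        (\<Prod>k<n. ((y - z) - ?\<omega> k * w) * ((y - cnj z) - cnj (?\<omega> k * w)))"
      by (simp add: map_poly_of_real_prod poly_prod poly_real_quadratic_complex algebra_simps)
    also have "\<dots> = (\<Prod>k<n. (y - z) - ?\<omega> k * w) * cnj (\<Prod>k<n. (cnj y - z) - ?\<omega> k * w)"
      by (simp add: prod.distrib)
    also have "\<dots> = ((y - z) ^ n - w ^ n) * ((y - cnj z) ^ n - cnj w ^ n)"
      by (simp add: prod_sub_roots_of_unity_scaled[OF n])
    also have "\<dots> = ((y - z) * (y - cnj z)) ^ n - (w ^ n * (y - cnj z) ^ n + cnj w ^ n * (y - z) ^ n)
        + (w * cnj w) ^ n"
      by (simp only: power_mult_distrib) algebra
    also have "(w * cnj w) ^ n = of_real ((cmod w) ^ (2 * n))"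
      by (metis complex_norm_square of_real_power power_mult)
    also have "((y - z) * (y - cnj z)) ^ n - (w ^ n * (y - cnj z) ^ n + cnj w ^ n * (y - z) ^ n) +
        of_real ((cmod w) ^ (2 * n)) = poly (map_poly of_real ?R) y"
      by (simp add: map_poly_of_real_simps poly_real_quadratic_complex poly_cross_term_complex)
    finally show ?thesis .
  qed
  then have "map_poly (of_real :: real \<Rightarrow> complex) ?L = map_poly of_real ?R"
    by (intro poly_eq_poly_eq_iff[THEN iffD1] ext)
  then show ?thesis by (simp add: map_poly_of_real_inject)
qed

definition root_defect :: "'k::real_normed_field \<Rightarrow> complex \<Rightarrow> real" where
  "root_defect x z = norm (poly (map_poly of_real (real_quadratic z)) x)"

lemma root_defect_nonneg: "root_defect x z \<ge> 0"
  by (simp add: root_defect_def)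

lemma continuous_root_defect: "continuous_on UNIV (root_defect x)"
  unfolding root_defect_def poly_real_quadratic by (intro continuous_intros)

lemma root_defect_prod_bound:
  fixes x :: "'k::real_normed_field"
  assumes min: "\<And>z'. c \<le> root_defect x z'" and z: "root_defect x z = c"
  shows "root_defect x (z + w) * c ^ m \<le>
    c ^ Suc m + 2 * (cmod w * (norm x + cmod z)) ^ Suc m + (cmod w ^ 2) ^ Suc m"
proof -
  define n where "n = Suc m"
  define \<zeta> where "\<zeta> k = z + cis (2 * pi * real k / real n) * w" for k
  let ?ev = "\<lambda>p. poly (map_poly of_real p) x"
  have "n > 0" by (simp add: n_def)
  have "root_defect x (z + w) * c ^ m = root_defect x (\<zeta> 0) * (\<Prod>i<m. c)"
    by (simp add: \<zeta>_def)
  also have "\<dots> \<le> root_defect x (\<zeta> 0) * (\<Prod>i<m. root_defect x (\<zeta> (Suc i)))"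
    using z by (intro mult_left_mono prod_mono) (auto simp: min root_defect_nonneg)
  also have "\<dots> = (\<Prod>k<n. root_defect x (\<zeta> k))"
    unfolding n_def by (rule prod.lessThan_Suc_shift[symmetric])
  also have "\<dots> = norm (?ev (\<Prod>k<n. real_quadratic (\<zeta> k)))"
    by (simp add: root_defect_def map_poly_of_real_prod poly_prod prod_norm)
  also have "\<dots> = norm (?ev (real_quadratic z) ^ n - 2 * ?ev (cross_term n z w) + of_real (cmod w ^ (2 * n)))"
    unfolding \<zeta>_def prod_real_quadratic_roots_of_unity[OF \<open>n > 0\<close>]
    by (simp add: map_poly_of_real_simps)
  also have "\<dots> \<le> norm (?ev (real_quadratic z) ^ n) + norm (2 * ?ev (cross_term n z w)) +
      norm (of_real (cmod w ^ (2 * n)) :: 'k)"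
    by (smt (verit) norm_triangle_ineq norm_triangle_ineq4)
  also have "\<dots> \<le> c ^ n + 2 * (cmod w * (norm x + cmod z)) ^ n + (cmod w ^ 2) ^ n"
    using z norm_poly_cross_term_le[of n z w x]
    by (simp add: root_defect_def norm_power norm_mult power_mult)
  finally show ?thesis by (simp add: n_def)
qed

text \<open>Dividing the bound by \<open>c ^ m\<close> and letting \<open>m \<rightarrow> \<infinity>\<close> shows that near a minimiser with
  positive value the defect cannot increase.\<close>
lemma root_defect_locally_constant_at_min:
  fixes x :: "'k::real_normed_field"
  assumes min: "\<And>z'. c \<le> root_defect x z'" and z: "root_defect x z = c" and "c > 0"
    and small1: "cmod w * (norm x + cmod z) < c" and small2: "cmod w ^ 2 < c"
  shows "root_defect x (z + w) = c"
proof -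
  define r1 where "r1 = cmod w * (norm x + cmod z) / c"
  define r2 where "r2 = cmod w ^ 2 / c"
  have r1: "0 \<le> r1" "r1 < 1" and r2: "0 \<le> r2" "r2 < 1"
    using small1 small2 \<open>c > 0\<close> by (auto simp: r1_def r2_def)
  define g where "g m = c + 2 * c * r1 ^ Suc m + c * r2 ^ Suc m" for m
  have "g \<longlonglongrightarrow> c + 2 * c * 0 + c * 0"
    unfolding g_def using r1 r2 by (intro tendsto_intros LIMSEQ_Suc LIMSEQ_power_zero) auto
  moreover have "root_defect x (z + w) \<le> g m" for m
  proof -
    have "root_defect x (z + w) * c ^ m \<le>
        c ^ Suc m + 2 * (cmod w * (norm x + cmod z)) ^ Suc m + (cmod w ^ 2) ^ Suc m"
      by (rule root_defect_prod_bound[OF min z])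
    also have "\<dots> = g m * c ^ m"
      using \<open>c > 0\<close> by (simp add: g_def r1_def r2_def field_simps)
    finally show ?thesis using \<open>c > 0\<close> by simp
  qed
  ultimately have "root_defect x (z + w) \<le> c"
    using LIMSEQ_le_const by force
  with min[of "z + w"] show ?thesis by simp
qed

lemma root_defect_large:
  fixes x :: "'k::real_normed_field"
  assumes "c \<ge> 0" and z: "cmod z \<ge> 3 * norm x + c + 1"
  shows "root_defect x z > c"
proof -
  let ?q = "poly (map_poly of_real (real_quadratic z)) x"
  have "(cmod z)\<^sup>2 = norm (?q - x\<^sup>2 + of_real (2 * Re z) * x)"
    by (simp add: poly_real_quadratic norm_power)
  also have "\<dots> \<le> norm ?q + norm (x\<^sup>2) + norm (of_real (2 * Re z) * x)"
    by (smt (verit) norm_triangle_ineq norm_triangle_ineq4)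
  also have "norm (of_real (2 * Re z) * x) \<le> 2 * cmod z * norm x"
    using abs_Re_le_cmod[of z] by (simp add: norm_mult mult_right_mono)
  finally have "(cmod z)\<^sup>2 \<le> root_defect x z + norm x ^ 2 + 2 * cmod z * norm x"
    by (simp add: root_defect_def norm_power)
  then have "root_defect x z \<ge> cmod z * (cmod z - 2 * norm x) - norm x ^ 2"
    by (simp add: power2_eq_square algebra_simps)
  moreover have "cmod z * (cmod z - 2 * norm x) \<ge> (3 * norm x + c + 1) * (norm x + c + 1)"
    using z \<open>c \<ge> 0\<close> by (intro mult_mono) auto
  moreover have "(3 * norm x + c + 1) * (norm x + c + 1) =
      norm x ^ 2 + c + 1 + (2 * norm x ^ 2 + 4 * norm x * (c + 1) + c * (c + 1))"
    by (simp add: algebra_simps power2_eq_square)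
  moreover have "2 * norm x ^ 2 + 4 * norm x * (c + 1) + c * (c + 1) \<ge> 0"
    using \<open>c \<ge> 0\<close> by (intro add_nonneg_nonneg mult_nonneg_nonneg) auto
  ultimately show ?thesis by linarith
qed

lemma root_defect_attains_min:
  fixes x :: "'k::real_normed_field"
  obtains z0 where "\<And>z. root_defect x z0 \<le> root_defect x z"
proof -
  define R where "R = 3 * norm x + root_defect x 0 + 1"
  have "R \<ge> 0" by (simp add: R_def root_defect_nonneg)
  then have "\<exists>z0\<in>cball 0 R. \<forall>z\<in>cball 0 R. root_defect x z0 \<le> root_defect x z"
    by (intro continuous_attains_inf continuous_on_subset[OF continuous_root_defect]) auto
  then obtain z0 where z0: "z0 \<in> cball 0 R" "\<And>z. z \<in> cball 0 R \<Longrightarrow> root_defect x z0 \<le> root_defect x z"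
    by blast
  have "root_defect x z0 \<le> root_defect x z" for z
  proof (cases "cmod z \<le> R")
    case True
    then show ?thesis using z0 by simp
  next
    case False
    then have "root_defect x z > root_defect x 0"
      by (intro root_defect_large) (auto simp: R_def root_defect_nonneg)
    moreover have "root_defect x z0 \<le> root_defect x 0" using z0 \<open>R \<ge> 0\<close> by simp
    ultimately show ?thesis by simp
  qed
  then show ?thesis by (rule that)
qed

text \<open>A Kametani-type argument: the minimum of the defect is zero, since otherwise the set of
  minimisers would be a nonempty clopen proper subset of \<open>\<complex>\<close>.\<close>
lemma real_normed_field_quadratic_root:
  fixes x :: "'k::real_normed_field"
  obtains z where "poly (map_poly of_real (real_quadratic z)) x = 0"
proof -
  obtain z0 where min: "\<And>z. root_defect x z0 \<le> root_defect x z"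
    using root_defect_attains_min by blast
  define c where "c = root_defect x z0"
  have "c = 0"
  proof (rule ccontr)
    assume "c \<noteq> 0"
    then have "c > 0" using root_defect_nonneg[of x z0] by (simp add: c_def)
    define S where "S = {z. root_defect x z = c}"
    have "closed S"
      unfolding S_def using continuous_root_defect by (intro closed_Collect_eq) auto
    moreover have "open S"
      unfolding open_contains_ball
    proof
      fix z assume "z \<in> S"
      define d where "d = min (c / (norm x + cmod z + 1)) (sqrt c)"
      have "d > 0" using \<open>c > 0\<close> by (simp add: d_def add_nonneg_pos)
      moreover have "y \<in> S" if "y \<in> ball z d" for y
      proof -
        define w where "w = y - z"
        have w: "cmod w < c / (norm x + cmod z + 1)" "cmod w < sqrt c"
          using that by (auto simp: w_def d_def dist_norm norm_minus_commute)
        have "cmod w * (norm x + cmod z) \<le> cmod w * (norm x + cmod z + 1)"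
          by (simp add: mult_left_mono)
        also have "\<dots> < c"
          using w(1) by (simp add: pos_less_divide_eq add_nonneg_pos)
        finally have "cmod w * (norm x + cmod z) < c" .
        moreover have "cmod w ^ 2 < c"
          using w(2) \<open>c > 0\<close> by (metis norm_ge_zero power_strict_mono real_sqrt_pow2 less_imp_le
              zero_less_numeral)
        ultimately have "root_defect x (z + w) = c"
          using \<open>z \<in> S\<close> \<open>c > 0\<close> min
          by (intro root_defect_locally_constant_at_min) (auto simp: S_def c_def)
        then show ?thesis by (simp add: S_def w_def)
      qed
      ultimately show "\<exists>d>0. ball z d \<subseteq> S" by blast
    qed
    moreover have "z0 \<in> S" by (simp add: S_def c_def)
    ultimately have "S = UNIV" using clopen by blast
    define r where "r = 3 * norm x + c + 1"
    have "r \<ge> 0" using \<open>c > 0\<close> by (simp add: r_def)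
    have "root_defect x (of_real r) > c"
    proof (rule root_defect_large)
      have "cmod (of_real r) = r" using \<open>r \<ge> 0\<close> by simp
      then show "cmod (of_real r) \<ge> 3 * norm x + c + 1" unfolding r_def by simp
    qed (use \<open>c > 0\<close> in simp)
    with \<open>S = UNIV\<close> show False by (auto simp: S_def)
  qed
  then show ?thesis using that by (simp add: c_def root_defect_def)
qed

lemma real_normed_field_elem_cases:
  fixes x :: "'k::real_normed_field"
  obtains (real) a where "x = of_real a"
  | (imaginary) j a b where "j * j = -1" "x = of_real a + of_real b * j"
proof -
  obtain z where "poly (map_poly of_real (real_quadratic z)) x = 0"
    using real_normed_field_quadratic_root by blast
  then have sq: "(x - of_real (Re z)) * (x - of_real (Re z)) = - of_real ((Im z)\<^sup>2)"
    unfolding poly_real_quadratic cmod_power2 by (simp add: algebra_simps power2_eq_square)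
  show ?thesis
  proof (cases "Im z = 0")
    case True
    then show ?thesis using sq real[of "Re z"] by simp
  next
    case False
    define j where "j = (x - of_real (Re z)) / of_real (Im z)"
    have "j * j = -1"
      using False by (simp add: j_def sq power2_eq_square)
    moreover have "x = of_real (Re z) + of_real (Im z) * j"
      using False by (simp add: j_def)
    ultimately show ?thesis by (rule imaginary)
  qed
qed

text \<open>The analogue of \<open>cis\<close> for a square root \<open>j\<close> of \<open>-1\<close>; \<open>j = 0\<close> stands in for it when
  the scalar field is \<open>\<real>\<close>.\<close>
definition jcis :: "'k::real_normed_field \<Rightarrow> real \<Rightarrow> 'k" where
  "jcis j \<theta> = of_real (cos \<theta>) + of_real (sin \<theta>) * j"

lemma continuous_on_jcis [continuous_intros]:
  fixes f :: "'a::t2_space \<Rightarrow> real"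
  assumes "continuous_on S f"
  shows "continuous_on S (\<lambda>x. jcis j (f x))"
  unfolding jcis_def by (intro continuous_intros assms)

lemma jcis_add:
  assumes "j * j = -1"
  shows "jcis j (\<theta> + \<phi>) = jcis j \<theta> * jcis j \<phi>"
proof -
  have "jcis j \<theta> * jcis j \<phi> = of_real (cos \<theta> * cos \<phi>) + of_real (sin \<theta> * sin \<phi>) * (j * j)
      + of_real (sin \<theta> * cos \<phi> + cos \<theta> * sin \<phi>) * j"
    by (simp add: jcis_def algebra_simps)
  also have "\<dots> = jcis j (\<theta> + \<phi>)"
    using assms by (simp add: jcis_def cos_add sin_add)
  finally show ?thesis by simp
qed

lemma jcis_power:
  assumes "j * j = -1"
  shows "jcis j \<theta> ^ n = jcis j (real n * \<theta>)"
  by (induction n) (simp_all add: jcis_def[of j 0] jcis_add[OF assms, symmetric] algebra_simps)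

lemma norm_jcis:
  assumes j: "j * j = -1"
  shows "norm (jcis j \<theta>) = 1"
proof -
  have bounded: "norm (jcis j t) \<le> 1 + norm j" for t
  proof -
    have "norm (jcis j t) \<le> \<bar>cos t\<bar> + \<bar>sin t\<bar> * norm j"
      using norm_triangle_ineq[of "of_real (cos t)" "of_real (sin t) * j"]
      by (simp add: jcis_def norm_mult)
    also have "\<dots> \<le> 1 + 1 * norm j"
      by (intro add_mono mult_right_mono) auto
    finally show ?thesis by simp
  qed
  have le1: "norm (jcis j t) \<le> 1" for t
  proof (rule ccontr)
    assume "\<not> norm (jcis j t) \<le> 1"
    then obtain n where "1 + norm j < norm (jcis j t) ^ n"
      using real_arch_pow by fastforce
    also have "\<dots> = norm (jcis j (real n * t))"
      by (simp add: jcis_power[OF j] flip: norm_power)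
    finally show False using bounded[of "real n * t"] by simp
  qed
  have "norm (jcis j \<theta>) * norm (jcis j (-\<theta>)) = 1"
    using jcis_add[OF j, of \<theta> "-\<theta>"] by (simp add: norm_mult[symmetric] jcis_def)
  then show ?thesis
    using le1[of \<theta>] le1[of "-\<theta>"] by (smt (verit) mult_left_le norm_ge_zero)
qed

text \<open>When \<open>u = \<plusminus>1\<close> there may be no square root of \<open>-1\<close>; then \<open>j = 0\<close> and the shift is
  \<open>0\<close> or \<open>\<pi>\<close>.\<close>
lemma unit_shifts_jcis:
  fixes u :: "'k::real_normed_field"
  assumes u: "norm u = 1"
  obtains j \<theta>\<^sub>0 where "j * j = -1 \<or> j = 0" "0 \<le> \<theta>\<^sub>0" "\<theta>\<^sub>0 \<le> 2 * pi"
    "\<And>\<theta>. jcis j \<theta> * u = jcis j (\<theta> + \<theta>\<^sub>0)"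
proof (cases u rule: real_normed_field_elem_cases)
  case (real a)
  then have "a = 1 \<or> a = -1" using u by auto
  then show ?thesis
  proof
    assume "a = 1"
    then show ?thesis by (intro that[of 0 0]) (simp_all add: real)
  next
    assume "a = -1"
    then show ?thesis by (intro that[of 0 pi]) (simp_all add: real jcis_def)
  qed
next
  case (imaginary j a b)
  define r where "r = sqrt (a\<^sup>2 + b\<^sup>2)"
  have "r \<noteq> 0"
    using u by (auto simp: r_def imaginary)
  then have "(a / r)\<^sup>2 + (b / r)\<^sup>2 = 1"
    by (simp add: r_def power_divide add_divide_distrib[symmetric])
  then obtain \<theta>\<^sub>0 where \<theta>\<^sub>0: "0 \<le> \<theta>\<^sub>0" "\<theta>\<^sub>0 < 2 * pi" "a / r = cos \<theta>\<^sub>0" "b / r = sin \<theta>\<^sub>0"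
    by (rule sincos_total_2pi)
  then have "u = of_real r * jcis j \<theta>\<^sub>0"
    using \<open>r \<noteq> 0\<close> by (simp add: imaginary jcis_def field_simps flip: of_real_mult)
  moreover from this have "r = 1"
    using u norm_jcis[OF imaginary(1)] by (simp add: norm_mult r_def)
  ultimately show ?thesis
    using \<theta>\<^sub>0 imaginary(1) by (intro that[of j \<theta>\<^sub>0]) (simp_all add: jcis_add)
qed

section \<open>Invariant measures and mutual singularity\<close>

lemma borel_probD:
  assumes "borel_prob m"
  shows "prob_space m" "sets m = sets borel" "space m = UNIV"
  using assms sets_eq_imp_space_eq[of m borel] unfolding borel_prob_def by auto

lemma invariant_measure_comp:
  assumes "f \<in> borel_measurable borel" "invariant_measure f m" "invariant_measure g m"
  shows "invariant_measure (\<lambda>x. f (g x)) m"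
  unfolding invariant_measure_def
proof
  fix A :: "'a set" assume "A \<in> sets borel"
  moreover from this have "f -` A \<in> sets borel" using measurable_sets_borel[OF assms(1)] by blast
  moreover have "(\<lambda>x. f (g x)) -` A = g -` (f -` A)" by auto
  ultimately show "emeasure m ((\<lambda>x. f (g x)) -` A) = emeasure m A"
    using assms(2,3) by (simp add: invariant_measure_def)
qed

lemma measure_invariant:
  "invariant_measure f m \<Longrightarrow> A \<in> sets borel \<Longrightarrow> measure m (f -` A) = measure m A"
  by (simp add: invariant_measure_def measure_def)

lemma measurable_funpow:
  "f \<in> measurable M M \<Longrightarrow> f ^^ n \<in> measurable M M"
  by (induction n) (auto simp: measurable_ident)

lemma invariant_measure_funpow:
  assumes "f \<in> borel_measurable borel" "invariant_measure f m"
  shows "invariant_measure (f ^^ n) m"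
proof (induction n)
  case 0
  then show ?case by (simp add: invariant_measure_def)
next
  case (Suc n)
  then show ?case
    using invariant_measure_comp[OF assms, of "f ^^ n"] by (simp add: comp_def)
qed

lemma borel_prob_eq_return:
  fixes m :: "'a::t1_space measure"
  assumes m: "borel_prob m" and c: "emeasure m {c} = 1"
  shows "m = return borel c"
proof (rule measure_eqI)
  interpret prob_space m using borel_probD[OF m] by blast
  have sets: "sets m = sets borel" using borel_probD[OF m] by blast
  show "sets m = sets (return borel c)" by (simp add: sets)
  have "AE x in m. x \<in> {c}"
    using c by (subst AE_in_set_eq_1) (simp_all add: sets emeasure_eq_measure)
  fix B assume "B \<in> sets m"
  then have "emeasure m B = emeasure m (B \<inter> {c})"
    using \<open>AE x in m. x \<in> {c}\<close> by (intro emeasure_eq_AE) (auto simp: sets)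
  also have "\<dots> = indicator B c"
    using c by (cases "c \<in> B") auto
  finally show "emeasure m B = emeasure (return borel c) B"
    using \<open>B \<in> sets m\<close> by (simp add: sets)
qed

lemma invariant_const_eq_return:
  fixes m :: "'a::t1_space measure"
  assumes m: "borel_prob m" and "invariant_measure (\<lambda>_. c) m"
  shows "m = return borel c"
proof (rule borel_prob_eq_return[OF m])
  interpret prob_space m using borel_probD[OF m] by blast
  have "{c} \<in> sets borel" by simp
  with assms(2) have "emeasure m ((\<lambda>_. c) -` {c}) = emeasure m {c}"
    unfolding invariant_measure_def by blast
  moreover have "(\<lambda>_. c) -` {c} = space m" using borel_probD[OF m] by auto
  ultimately show "emeasure m {c} = 1" using emeasure_space_1 by simp
qed

text \<open>Conditioning on the complement of a fixed point preserves invariance.\<close>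
lemma invariant_measure_avoiding_fixed_point:
  fixes m :: "'a::t1_space measure"
  assumes m: "borel_prob m" and inv: "invariant_measure S m" and S: "S \<in> borel_measurable borel"
    and c: "S c = c" and ne: "m \<noteq> return borel c"
  obtains m' where "borel_prob m'" "invariant_measure S m'" "emeasure m' {c} = 0"
proof
  interpret prob_space m using borel_probD[OF m] by blast
  have sets: "sets m = sets borel" and space: "space m = UNIV" using borel_probD[OF m] by blast+
  define A where "A = UNIV - {c}"
  have A: "A \<in> sets m" by (simp add: A_def sets)
  have "emeasure m A \<noteq> 0"
  proof
    assume "emeasure m A = 0"
    then have "emeasure m {c} = 1"
      using emeasure_compl[of A m] A emeasure_space_1 by (simp add: A_def space Diff_Diff_Int)
    then show False using borel_prob_eq_return[OF m] ne by blast
  qed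
  then show "borel_prob (uniform_measure m A)"
    by (auto simp: borel_prob_def sets intro!: prob_space_uniform_measure)
  show "emeasure (uniform_measure m A) {c} = 0"
    using A by (simp add: sets A_def)
  have restrict: "emeasure m (A \<inter> X) = emeasure m X - emeasure m (X \<inter> {c})" if "X \<in> sets borel" for X
  proof -
    have "A \<inter> X = X - X \<inter> {c}" by (auto simp: A_def)
    then show ?thesis using that by (simp add: emeasure_Diff sets emeasure_finite)
  qed
  show "invariant_measure S (uniform_measure m A)"
    unfolding invariant_measure_def
  proof
    fix B :: "'a set" assume B: "B \<in> sets borel"
    moreover have SB: "S -` B \<in> sets borel" using S B by (rule measurable_sets_borel)
    moreover have "S -` B \<inter> {c} = B \<inter> {c}" using c by auto
    ultimately have "emeasure m (A \<inter> S -` B) = emeasure m (A \<inter> B)"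
      using inv by (simp add: restrict invariant_measure_def)
    then show "emeasure (uniform_measure m A) (S -` B) = emeasure (uniform_measure m A) B"
      using A B SB by (simp add: sets)
  qed
qed

lemma mutually_singular_commute:
  "mutually_singular m1 m2 \<longleftrightarrow> mutually_singular m2 m1"
proof -
  have "mutually_singular m1 m2 \<Longrightarrow> mutually_singular m2 m1" for m1 m2 :: "'a measure"
    unfolding mutually_singular_def by (metis Diff_Diff_Int Int_UNIV_left sets.compl_sets space_borel)
  then show ?thesis by blast
qed

lemma not_mutually_singular_self:
  assumes m: "borel_prob m"
  shows "\<not> mutually_singular m m"
proof
  interpret prob_space m using borel_probD[OF m] by blast
  assume "mutually_singular m m"
  then obtain A where A: "A \<in> sets borel" "emeasure m A = 0" "emeasure m (UNIV - A) = 0"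
    unfolding mutually_singular_def by blast
  then have "emeasure m (UNIV - A) = 1"
    using emeasure_compl[of A m] borel_probD[OF m] emeasure_space_1 by simp
  with A(3) show False by simp
qed

lemma not_orthogonal_ops_if_common_invariant:
  assumes "borel_prob \<nu>" "emeasure \<nu> {0} = 0" "invariant_measure S1 \<nu>" "invariant_measure S2 \<nu>"
  shows "\<not> orthogonal_ops S1 S2"
  using assms not_mutually_singular_self unfolding orthogonal_ops_def by blast

lemma mutually_singular_if_separated:
  assumes m1: "borel_prob m1" and m2: "borel_prob m2"
    and sep: "\<And>e. e > 0 \<Longrightarrow> \<exists>B\<in>sets borel. measure m1 (UNIV - B) < e \<and> measure m2 B < e"
  shows "mutually_singular m1 m2"
proof -
  interpret P1: prob_space m1 using borel_probD[OF m1] by blast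
  interpret P2: prob_space m2 using borel_probD[OF m2] by blast
  obtain B where B: "\<And>n. B n \<in> sets borel"
    "\<And>n. measure m1 (UNIV - B n) < (1/2) ^ n" "\<And>n. measure m2 (B n) < (1/2) ^ n"
    using sep[of "(1/2) ^ _"] by (metis zero_less_divide_1_iff zero_less_numeral zero_less_power)
  have summable: "summable (\<lambda>n. (1/2::real) ^ n)" by (simp add: summable_geometric)
  define A where "A = limsup (\<lambda>n. UNIV - B n)"
  have A: "A \<in> null_sets m1"
    unfolding A_def using B(1,2) borel_probD[OF m1]
    by (intro borel_cantelli_limsup1 summable_comparison_test'[OF summable])
      (auto simp: less_top[symmetric] P1.emeasure_finite intro: less_imp_le)
  have "limsup B \<in> null_sets m2"
    using B(1,3) borel_probD[OF m2]
    by (intro borel_cantelli_limsup1 summable_comparison_test'[OF summable])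
      (auto simp: less_top[symmetric] P2.emeasure_finite intro: less_imp_le)
  moreover have "UNIV - A \<in> sets m2"
    using A borel_probD[OF m1] borel_probD[OF m2] by auto
  moreover have "UNIV - A \<subseteq> limsup B"
    by (auto simp: A_def limsup_INF_SUP) (metis atLeast_iff max.cobounded1 max.cobounded2)
  ultimately have "UNIV - A \<in> null_sets m2"
    by (rule null_sets_subset)
  then show ?thesis
    unfolding mutually_singular_def using A borel_probD[OF m1] by auto
qed

lemma compact_inner_approx:
  fixes m :: "'a::polish_space measure"
  assumes m: "borel_prob m" and B: "B \<in> sets borel" "emeasure m B = 1" and "e > 0"
  obtains K where "compact K" "K \<subseteq> B" "measure m (UNIV - K) < e"
proof -
  interpret prob_space m using borel_probD[OF m] by blast
  have sets: "sets m = sets borel" and space: "space m = UNIV" using borel_probD[OF m] by blast+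
  have "ennreal (1 - e) < (SUP K \<in> {K. K \<subseteq> B \<and> compact K}. emeasure m K)"
    using inner_regular[OF sets _ B(1)] B(2) \<open>e > 0\<close> by (simp add: ennreal_lessI)
  then obtain K where K: "K \<subseteq> B" "compact K" "ennreal (1 - e) < emeasure m K"
    by (auto simp: less_SUP_iff)
  have "K \<in> sets m" using compact_imp_closed[OF K(2)] by (simp add: sets)
  then have "measure m (UNIV - K) = 1 - measure m K"
    using prob_compl space by simp
  moreover have "1 - e < measure m K"
  proof (cases "e \<le> 1")
    case True
    then show ?thesis using K(3) by (simp add: emeasure_eq_measure ennreal_less_iff)
  next
    case False
    then show ?thesis using measure_nonneg[of m K] by linarith
  qed
  ultimately show ?thesis using K that by simp
qed

section \<open>Averaging over rotations\<close>

definition angle_measure :: "real measure" where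
  "angle_measure = uniform_measure lborel {0..<2 * pi}"

lemma prob_space_angle_measure: "prob_space angle_measure"
  unfolding angle_measure_def by (rule prob_space_uniform_measure) auto

lemma sets_angle_measure [simp, measurable_cong]: "sets angle_measure = sets borel"
  by (simp add: angle_measure_def)

lemma space_angle_measure [simp]: "space angle_measure = UNIV"
  by (simp add: angle_measure_def)

lemma nn_integral_angle_measure_shift:
  fixes h :: "real \<Rightarrow> ennreal"
  assumes [measurable]: "h \<in> borel_measurable borel" and periodic: "\<And>x. h (x + 2 * pi) = h x"
    and t: "0 \<le> t" "t \<le> 2 * pi"
  shows "(\<integral>\<^sup>+\<theta>. h (\<theta> + t) \<partial>angle_measure) = (\<integral>\<^sup>+\<theta>. h \<theta> \<partial>angle_measure)"
proof -
  have shift: "(\<integral>\<^sup>+x. f (x + s) \<partial>lborel) = (\<integral>\<^sup>+x. f x \<partial>lborel)"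
    if "f \<in> borel_measurable borel" for f :: "real \<Rightarrow> ennreal" and s
    using nn_integral_real_affine[OF that, of 1 s] by (simp add: add.commute)
  let ?I = "\<lambda>a b \<theta>. h \<theta> * indicator {a..<b} \<theta>"
  have "(\<integral>\<^sup>+\<theta>. h (\<theta> + t) * indicator {0..<2 * pi} \<theta> \<partial>lborel) =
      (\<integral>\<^sup>+\<theta>. ?I t (t + 2 * pi) (\<theta> + t) \<partial>lborel)"
    by (intro nn_integral_cong) (auto simp: indicator_def)
  also have "\<dots> = (\<integral>\<^sup>+\<theta>. ?I t (t + 2 * pi) \<theta> \<partial>lborel)"
    by (rule shift) measurable
  also have "\<dots> = (\<integral>\<^sup>+\<theta>. ?I t (2 * pi) \<theta> + ?I (2 * pi) (2 * pi + t) \<theta> \<partial>lborel)"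
    using t by (intro nn_integral_cong) (auto simp: indicator_def)
  also have "\<dots> = (\<integral>\<^sup>+\<theta>. ?I t (2 * pi) \<theta> \<partial>lborel) + (\<integral>\<^sup>+\<theta>. ?I (2 * pi) (2 * pi + t) \<theta> \<partial>lborel)"
    by (rule nn_integral_add) measurable
  also have "(\<integral>\<^sup>+\<theta>. ?I (2 * pi) (2 * pi + t) \<theta> \<partial>lborel) =
      (\<integral>\<^sup>+\<theta>. ?I (2 * pi) (2 * pi + t) (\<theta> + 2 * pi) \<partial>lborel)"
    by (rule shift[symmetric]) measurable
  also have "\<dots> = (\<integral>\<^sup>+\<theta>. ?I 0 t \<theta> \<partial>lborel)"
    by (intro nn_integral_cong) (auto simp: periodic indicator_def)
  also have "(\<integral>\<^sup>+\<theta>. ?I t (2 * pi) \<theta> \<partial>lborel) + (\<integral>\<^sup>+\<theta>. ?I 0 t \<theta> \<partial>lborel) =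
      (\<integral>\<^sup>+\<theta>. ?I t (2 * pi) \<theta> + ?I 0 t \<theta> \<partial>lborel)"
    by (rule nn_integral_add[symmetric]) measurable
  also have "\<dots> = (\<integral>\<^sup>+\<theta>. h \<theta> * indicator {0..<2 * pi} \<theta> \<partial>lborel)"
    using t by (intro nn_integral_cong) (auto simp: indicator_def)
  finally show ?thesis
    unfolding angle_measure_def by (simp add: nn_integral_uniform_measure)
qed

lemma AE_angle_measure_jcis_nonzero:
  assumes "j * j = -1 \<or> j = 0"
  shows "AE \<theta> in angle_measure. jcis j \<theta> \<noteq> 0"
proof -
  have "{\<theta>. jcis j \<theta> = 0} \<subseteq> range (\<lambda>i::int. real_of_int i * (pi / 2))"
  proof
    fix \<theta> assume "\<theta> \<in> {\<theta>. jcis j \<theta> = 0}"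
    then have "cos \<theta> = 0"
      using assms norm_jcis[of j \<theta>] by (auto simp: jcis_def)
    then show "\<theta> \<in> range (\<lambda>i::int. real_of_int i * (pi / 2))"
      by (auto simp: cos_zero_iff_int)
  qed
  moreover have "closed {\<theta>. jcis j \<theta> = 0}"
    by (intro closed_Collect_eq continuous_intros)
  ultimately have "{\<theta>. jcis j \<theta> = 0} \<in> null_sets lborel"
    by (intro null_sets_subset[OF countable_imp_null_set_lborel]) auto
  then have "AE \<theta> in lborel. jcis j \<theta> \<noteq> 0"
    by (rule AE_I') auto
  then show ?thesis
    unfolding angle_measure_def by (intro AE_uniform_measureI) auto
qed

locale continuous_scaling = vector_space scale
  for scale :: "'k::real_normed_field \<Rightarrow> 'a::{ab_group_add,polish_space} \<Rightarrow> 'a" +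
  assumes continuous_scale: "continuous_on UNIV (\<lambda>p. scale (fst p) (snd p))"
begin

lemma continuous_on_scale [continuous_intros]:
  assumes "continuous_on S f" "continuous_on S g"
  shows "continuous_on S (\<lambda>x. scale (f x) (g x))"
proof -
  have "continuous_on S ((\<lambda>p. scale (fst p) (snd p)) \<circ> (\<lambda>x. (f x, g x)))"
    by (intro continuous_on_compose continuous_intros assms
        continuous_on_subset[OF continuous_scale subset_UNIV])
  then show ?thesis by (simp add: comp_def)
qed

lemma scale_measurable [measurable]: "(\<lambda>x. scale c x) \<in> borel_measurable borel"
  by (intro borel_measurable_continuous_onI continuous_intros)

definition rotation_average :: "'k \<Rightarrow> 'a measure \<Rightarrow> 'a measure" where
  "rotation_average j m = distr (angle_measure \<Otimes>\<^sub>M m) borel (\<lambda>p. scale (jcis j (fst p)) (snd p))"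

lemma measurable_rotation:
  assumes "sets m = sets borel"
  shows "(\<lambda>p. scale (jcis j (fst p)) (snd p)) \<in> measurable (angle_measure \<Otimes>\<^sub>M m) borel"
proof -
  have "sets (angle_measure \<Otimes>\<^sub>M m) = sets (borel \<Otimes>\<^sub>M (borel :: 'a measure))"
    using assms by (intro sets_pair_measure_cong) auto
  also have "\<dots> = sets borel" by (subst borel_prod) (rule refl)
  finally have "measurable (angle_measure \<Otimes>\<^sub>M m) (borel :: 'a measure) = borel_measurable borel"
    by (rule measurable_cong_sets) (rule refl)
  moreover have "(\<lambda>p. scale (jcis j (fst p)) (snd p)) \<in> borel_measurable borel"
    by (intro borel_measurable_continuous_onI continuous_intros)
  ultimately show ?thesis by simp
qed

context
  fixes m :: "'a measure"
  assumes m: "borel_prob m"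
begin

interpretation m: prob_space m using borel_probD[OF m] by blast

lemma emeasure_rotation_average:
  assumes "A \<in> sets borel"
  shows "emeasure (rotation_average j m) A =
    (\<integral>\<^sup>+\<theta>. emeasure m ((\<lambda>x. scale (jcis j \<theta>) x) -` A) \<partial>angle_measure)"
proof -
  let ?R = "\<lambda>p. scale (jcis j (fst p)) (snd p)"
  have R: "?R \<in> measurable (angle_measure \<Otimes>\<^sub>M m) borel"
    using measurable_rotation[OF borel_probD(2)[OF m]] .
  have "emeasure (rotation_average j m) A = emeasure (angle_measure \<Otimes>\<^sub>M m) (?R -` A \<inter> space (angle_measure \<Otimes>\<^sub>M m))"
    unfolding rotation_average_def by (rule emeasure_distr[OF R assms])
  also have "\<dots> = (\<integral>\<^sup>+\<theta>. emeasure m (Pair \<theta> -` (?R -` A \<inter> space (angle_measure \<Otimes>\<^sub>M m))) \<partial>angle_measure)"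
    by (rule m.emeasure_pair_measure_alt) (rule measurable_sets[OF R assms])
  also have "\<dots> = (\<integral>\<^sup>+\<theta>. emeasure m ((\<lambda>x. scale (jcis j \<theta>) x) -` A) \<partial>angle_measure)"
    using borel_probD(3)[OF m] by (intro nn_integral_cong) (simp add: space_pair_measure vimage_def)
  finally show ?thesis .
qed

lemma measurable_emeasure_rotation:
  assumes "A \<in> sets borel"
  shows "(\<lambda>\<theta>. emeasure m ((\<lambda>x. scale (jcis j \<theta>) x) -` A)) \<in> borel_measurable borel"
proof -
  have "(\<lambda>\<theta>. emeasure m (Pair \<theta> -` ((\<lambda>p. scale (jcis j (fst p)) (snd p)) -` A \<inter> space (angle_measure \<Otimes>\<^sub>M m))))
      \<in> borel_measurable angle_measure"
    using measurable_rotation[OF borel_probD(2)[OF m]] assms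
    by (intro m.measurable_emeasure_Pair measurable_sets)
  then show ?thesis
    using borel_probD(3)[OF m] by (simp add: space_pair_measure vimage_def measurable_def)
qed

lemma borel_prob_rotation_average: "borel_prob (rotation_average j m)"
  unfolding borel_prob_def rotation_average_def
  using prob_space.prob_space_distr[OF prob_space_pair[OF prob_space_angle_measure m.prob_space_axioms]
      measurable_rotation[OF borel_probD(2)[OF m]]]
  by simp

lemma emeasure_rotation_average_zero:
  assumes "emeasure m {0} = 0" and "j * j = -1 \<or> j = 0"
  shows "emeasure (rotation_average j m) {0} = 0"
proof -
  have "emeasure (rotation_average j m) {0} = (\<integral>\<^sup>+\<theta>. 0 \<partial>angle_measure)"
    unfolding emeasure_rotation_average[OF borel_singleton[OF sets.empty_sets]]
    using AE_angle_measure_jcis_nonzero[OF assms(2)]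
  proof (intro nn_integral_cong_AE, eventually_elim)
    case (elim \<theta>)
    then have "(\<lambda>x. scale (jcis j \<theta>) x) -` {0} = {0}" by auto
    then show ?case using assms(1) by simp
  qed
  then show ?thesis by simp
qed

lemma invariant_rotation_average:
  assumes inv: "invariant_measure S m" and S: "S \<in> borel_measurable borel"
    and commute: "\<And>c x. S (scale c x) = scale c (S x)"
  shows "invariant_measure S (rotation_average j m)"
  unfolding invariant_measure_def
proof
  fix A :: "'a set" assume A [measurable]: "A \<in> sets borel"
  have "emeasure m ((\<lambda>x. scale (jcis j \<theta>) x) -` (S -` A)) = emeasure m ((\<lambda>x. scale (jcis j \<theta>) x) -` A)" for \<theta>
  proof -
    have "(\<lambda>x. scale (jcis j \<theta>) x) -` (S -` A) = S -` ((\<lambda>x. scale (jcis j \<theta>) x) -` A)"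
      by (auto simp: commute)
    moreover have "(\<lambda>x. scale (jcis j \<theta>) x) -` A \<in> sets borel"
      using measurable_sets_borel[OF scale_measurable A] .
    ultimately show ?thesis using inv by (simp add: invariant_measure_def)
  qed
  moreover have "S -` A \<in> sets borel" using measurable_sets_borel[OF S A] .
  ultimately show "emeasure (rotation_average j m) (S -` A) = emeasure (rotation_average j m) A"
    by (simp add: emeasure_rotation_average)
qed

lemma invariant_rotation_average_scale:
  assumes shift: "\<And>\<theta>. jcis j \<theta> * u = jcis j (\<theta> + \<theta>\<^sub>0)" and "0 \<le> \<theta>\<^sub>0" "\<theta>\<^sub>0 \<le> 2 * pi"
  shows "invariant_measure (\<lambda>x. scale u x) (rotation_average j m)"
  unfolding invariant_measure_def
proof
  fix A :: "'a set" assume A [measurable]: "A \<in> sets borel"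
  have "(\<lambda>x. scale (jcis j \<theta>) x) -` ((\<lambda>x. scale u x) -` A) = (\<lambda>x. scale (jcis j (\<theta> + \<theta>\<^sub>0)) x) -` A" for \<theta>
    by (auto simp: shift[symmetric] mult.commute)
  moreover have "(\<lambda>x. scale u x) -` A \<in> sets borel" using measurable_sets_borel[OF scale_measurable A] .
  ultimately have "emeasure (rotation_average j m) ((\<lambda>x. scale u x) -` A) =
      (\<integral>\<^sup>+\<theta>. emeasure m ((\<lambda>x. scale (jcis j (\<theta> + \<theta>\<^sub>0)) x) -` A) \<partial>angle_measure)"
    by (simp add: emeasure_rotation_average)
  also have "\<dots> = (\<integral>\<^sup>+\<theta>. emeasure m ((\<lambda>x. scale (jcis j \<theta>) x) -` A) \<partial>angle_measure)"
    using measurable_emeasure_rotation[OF A] assms(2,3)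
    by (intro nn_integral_angle_measure_shift) (simp_all add: jcis_def)
  also have "\<dots> = emeasure (rotation_average j m) A"
    by (simp add: emeasure_rotation_average)
  finally show "emeasure (rotation_average j m) ((\<lambda>x. scale u x) -` A) = emeasure (rotation_average j m) A" .
qed

end

lemma exists_common_invariant_measure:
  assumes u: "norm u = 1"
    and m: "borel_prob m" "invariant_measure S m" "emeasure m {0} = 0"
    and S: "S \<in> borel_measurable borel" "\<And>c x. S (scale c x) = scale c (S x)"
  obtains \<nu> where "borel_prob \<nu>" "emeasure \<nu> {0} = 0"
    "invariant_measure S \<nu>" "invariant_measure (\<lambda>x. scale u (S x)) \<nu>"
proof -
  obtain j \<theta>\<^sub>0 where j: "j * j = -1 \<or> j = 0" and \<theta>\<^sub>0: "0 \<le> \<theta>\<^sub>0" "\<theta>\<^sub>0 \<le> 2 * pi"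
    and shift: "\<And>\<theta>. jcis j \<theta> * u = jcis j (\<theta> + \<theta>\<^sub>0)"
    using unit_shifts_jcis[OF u] by blast
  have "invariant_measure S (rotation_average j m)"
    using invariant_rotation_average[OF m(1,2) S] .
  moreover have "invariant_measure (\<lambda>x. scale u (S x)) (rotation_average j m)"
    using invariant_measure_comp[OF scale_measurable
        invariant_rotation_average_scale[OF m(1) shift \<theta>\<^sub>0] calculation] .
  ultimately show ?thesis
    using borel_prob_rotation_average[OF m(1)] emeasure_rotation_average_zero[OF m(1,3) j] that
    by blast
qed

end

section \<open>Separation of the orbits\<close>

context continuous_scaling
begin

lemma scale_power_eventually_avoids:
  assumes K: "compact K" "0 \<notin> K" and K': "compact K'" and t: "norm t < 1"
  obtains N where "\<And>y. y \<in> K' \<Longrightarrow> scale (t ^ N) y \<notin> K"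
proof -
  define W where "W = (\<lambda>p. scale (fst p) (snd p)) -` (UNIV - K)"
  have "open (UNIV - K)" using compact_imp_closed[OF K(1)] by (simp add: open_Diff)
  then have "open W" unfolding W_def by (rule open_vimage[OF _ continuous_scale])
  moreover have "{0} \<times> K' \<subseteq> W" using K(2) by (auto simp: W_def)
  ultimately have "\<exists>U. 0 \<in> U \<and> open U \<and> U \<times> K' \<subseteq> W"
    by (rule Elementary_Topology.tube_lemma[OF K'])
  then obtain U where U: "0 \<in> U" "open U" "U \<times> K' \<subseteq> W"
    by blast
  have "\<forall>\<^sub>F n in sequentially. t ^ n \<in> U"
    using LIMSEQ_power_zero[OF t] U(2,1) by (rule topological_tendstoD)
  then obtain N where "t ^ N \<in> U" by (auto simp: eventually_sequentially)
  then have "(t ^ N, y) \<in> W" if "y \<in> K'" for y using U(3) that by (meson SigmaI subsetD)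
  then show ?thesis by (intro that[of N]) (simp add: W_def)
qed

lemma funpow_scaled_map:
  assumes commute: "\<And>c x. T (scale c x) = scale c (T x)"
  shows "((\<lambda>x. scale c (T x)) ^^ n) x = scale (c ^ n) ((T ^^ n) x)"
  by (induction n) (simp_all add: commute scale_scale)

lemma mutually_singular_scaled_invariant:
  assumes commute: "\<And>c x. T (scale c x) = scale c (T x)" and T: "continuous_on UNIV T"
    and ab: "norm a < norm b"
    and m1: "borel_prob m1" "invariant_measure (\<lambda>x. scale a (T x)) m1" "emeasure m1 {0} = 0"
    and m2: "borel_prob m2" "invariant_measure (\<lambda>x. scale b (T x)) m2"
  shows "mutually_singular m1 m2"
proof (rule mutually_singular_if_separated[OF m1(1) m2(1)])
  interpret P1: prob_space m1 using borel_probD[OF m1(1)] by blast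
  interpret P2: prob_space m2 using borel_probD[OF m2(1)] by blast
  fix e :: real assume "e > 0"
  have "UNIV - {0::'a} \<in> sets borel" by (intro borel_open open_Diff closed_singleton) auto
  moreover have "emeasure m1 (UNIV - {0}) = 1"
    using emeasure_compl[of "{0}" m1] m1(3) borel_probD[OF m1(1)] P1.emeasure_space_1 by simp
  ultimately obtain K where K: "compact K" "K \<subseteq> UNIV - {0}" "measure m1 (UNIV - K) < e"
    by (rule compact_inner_approx[OF m1(1) _ _ \<open>e > 0\<close>])
  have "emeasure m2 UNIV = 1"
    using P2.emeasure_space_1 borel_probD[OF m2(1)] by simp
  then obtain K' where K': "compact K'" "measure m2 (UNIV - K') < e"
    by (rule compact_inner_approx[OF m2(1) sets.top[of borel, unfolded space_borel] _ \<open>e > 0\<close>])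
  have "0 \<notin> K" using K(2) by blast
  have "norm (a / b) < 1" using ab norm_ge_zero[of a] by (simp add: norm_divide divide_less_eq)
  then obtain N where N: "\<And>y. y \<in> K' \<Longrightarrow> scale ((a / b) ^ N) y \<notin> K"
    using scale_power_eventually_avoids[OF K(1) \<open>0 \<notin> K\<close> K'(1)] by blast
  define Sa where "Sa = (\<lambda>x. scale a (T x)) ^^ N"
  define Sb where "Sb = (\<lambda>x. scale b (T x)) ^^ N"
  have meas: "(\<lambda>x. scale c (T x)) \<in> borel_measurable borel" for c
    by (intro borel_measurable_continuous_onI continuous_intros T)
  have inv: "invariant_measure Sa m1" "invariant_measure Sb m2"
    unfolding Sa_def Sb_def
    using invariant_measure_funpow[OF meas m1(2)] invariant_measure_funpow[OF meas m2(2)] .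
  have closed: "UNIV - K \<in> sets borel" "UNIV - K' \<in> sets borel"
    using K(1) K'(1) by (auto intro: borel_closed compact_imp_closed)
  have "Sa -` K \<inter> Sb -` K' = {}"
  proof (rule ccontr)
    assume "Sa -` K \<inter> Sb -` K' \<noteq> {}"
    then obtain x where "Sa x \<in> K" "Sb x \<in> K'" by blast
    then have "scale (a ^ N) ((T ^^ N) x) \<in> K" "scale (b ^ N) ((T ^^ N) x) \<in> K'"
      by (simp_all add: Sa_def Sb_def funpow_scaled_map[OF commute])
    moreover have "b \<noteq> 0" using ab by auto
    then have "(a / b) ^ N * b ^ N = a ^ N" by (simp add: power_divide)
    ultimately show False using N[of "scale (b ^ N) ((T ^^ N) x)"] by (simp add: scale_scale)
  qed
  have "Sa \<in> borel_measurable borel" "Sb \<in> borel_measurable borel"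
    unfolding Sa_def Sb_def using measurable_funpow[OF meas] by blast+
  moreover have "K \<in> sets borel" using K(1) by (intro borel_closed compact_imp_closed)
  ultimately have sets: "Sa -` K \<in> sets borel" "Sb -` (UNIV - K') \<in> sets borel"
    using closed(2) by (auto intro: measurable_sets_borel)
  show "\<exists>B\<in>sets borel. measure m1 (UNIV - B) < e \<and> measure m2 B < e"
  proof (intro bexI conjI)
    have "UNIV - Sa -` K = Sa -` (UNIV - K)" by auto
    then show "measure m1 (UNIV - Sa -` K) < e"
      using K(3) measure_invariant[OF inv(1) closed(1)] by simp
    have "Sa -` K \<subseteq> Sb -` (UNIV - K')"
      using \<open>Sa -` K \<inter> Sb -` K' = {}\<close> by auto
    then have "measure m2 (Sa -` K) \<le> measure m2 (Sb -` (UNIV - K'))"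
      using sets borel_probD[OF m2(1)] by (intro P2.finite_measure_mono) auto
    then show "measure m2 (Sa -` K) < e"
      using K'(2) measure_invariant[OF inv(2) closed(2)] by simp
  qed (rule sets(1))
qed

lemma orthogonal_ops_scaled:
  assumes commute: "\<And>c x. T (scale c x) = scale c (T x)" and T: "continuous_on UNIV T"
    and "norm a \<noteq> norm b"
  shows "orthogonal_ops (\<lambda>x. scale a (T x)) (\<lambda>x. scale b (T x))"
  unfolding orthogonal_ops_def
  using assms(3) mutually_singular_scaled_invariant[OF commute T] mutually_singular_commute
  by (metis linorder_neqE_linordered_idom)

lemma common_invariant_measure_scaled:
  assumes commute: "\<And>c x. T (scale c x) = scale c (T x)" and T: "continuous_on UNIV T"
    and ab: "norm a = norm b"
    and m: "borel_prob m" "invariant_measure (\<lambda>x. scale a (T x)) m" "m \<noteq> return borel 0"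
  obtains \<nu> where "borel_prob \<nu>" "emeasure \<nu> {0} = 0"
    "invariant_measure (\<lambda>x. scale a (T x)) \<nu>" "invariant_measure (\<lambda>x. scale b (T x)) \<nu>"
proof -
  let ?Sa = "\<lambda>x. scale a (T x)"
  have meas: "?Sa \<in> borel_measurable borel"
    by (intro borel_measurable_continuous_onI continuous_intros T)
  have "a \<noteq> 0"
    using m invariant_const_eq_return[of m 0] by auto
  moreover from this have "b \<noteq> 0" using ab by (metis norm_eq_zero)
  ultimately have "norm (b / a) = 1" and Sb: "(\<lambda>x. scale (b / a) (?Sa x)) = (\<lambda>x. scale b (T x))"
    using ab by (simp_all add: norm_divide scale_scale)
  moreover obtain m' where "borel_prob m'" "invariant_measure ?Sa m'" "emeasure m' {0} = 0"
    using invariant_measure_avoiding_fixed_point[OF m(1,2) meas _ m(3)] commute[of 0] by auto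
  moreover have "?Sa (scale c x) = scale c (?Sa x)" for c x
    by (simp add: commute scale_left_commute)
  ultimately show ?thesis
    using exists_common_invariant_measure[OF _ _ _ _ meas] that by (metis Sb)
qed

end

theorem corollary3p6:
  fixes smult_op :: "'k::real_normed_field \<Rightarrow> 'a::{ab_group_add,polish_space} \<Rightarrow> 'a"
    and T :: "'a \<Rightarrow> 'a" and a b :: 'k
  assumes "polish_tvs smult_op"
    and "Vector_Spaces.linear smult_op smult_op T"
    and "continuous_on UNIV T"
    and "\<exists>m. borel_prob m \<and> invariant_measure (\<lambda>x. smult_op a (T x)) m \<and> m \<noteq> return borel 0"
    and "\<exists>m. borel_prob m \<and> invariant_measure (\<lambda>x. smult_op b (T x)) m \<and> m \<noteq> return borel 0"
  shows "(orthogonal_ops (\<lambda>x. smult_op a (T x)) (\<lambda>x. smult_op b (T x)) \<longleftrightarrow> norm a \<noteq> norm b)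
    \<and> (norm a \<noteq> norm b \<longrightarrow> orthogonal_ops (\<lambda>x. smult_op a (T x)) (\<lambda>x. smult_op b (T x)))
    \<and> (norm a = norm b \<longrightarrow> (\<exists>m. borel_prob m \<and> m \<noteq> return borel 0 \<and>
          invariant_measure (\<lambda>x. smult_op a (T x)) m \<and> invariant_measure (\<lambda>x. smult_op b (T x)) m))"
proof -
  interpret continuous_scaling smult_op
    using assms(1) by unfold_locales (auto simp: polish_tvs_def vector_space_def)
  interpret T: Vector_Spaces.linear smult_op smult_op T by (fact assms(2))
  obtain m where m: "borel_prob m" "invariant_measure (\<lambda>x. smult_op a (T x)) m" "m \<noteq> return borel 0"
    using assms(4) by blast
  have "\<nu> \<noteq> return borel 0" if "emeasure \<nu> {0} = 0" for \<nu> :: "'a measure"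
    using that by auto
  then show ?thesis
    using orthogonal_ops_scaled[OF T.scale assms(3)] not_orthogonal_ops_if_common_invariant
      common_invariant_measure_scaled[OF T.scale assms(3) _ m]
    by metis
qed

end
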